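(* Let $n,m$ be positive integers, let $x\in\mathbb{R}^n$, $y\in\mathbb{R}^m$ and $Z=(z_{ij})\in\mathbb{R}^{n\times m}$. For $i\in[n]$, $j\in[m]$ put $P_{ij}:=(x_i,y_j,z_{ij})\in\mathbb{R}^3$, and define the convex sets \[ A_i:=\operatorname{conv}\{P_{ij}: j\in[m]\}\quad (i\in[n]),\qquad B_j:=\operatorname{conv}\{P_{ij}: i\in[n]\}\quad (j\in[m]). \] Then at least one of the following holds: (1) there is a real number $x_0$ and a line $l_x$ contained in the plane $\{(x_0,s,t): s,t\in\mathbb{R}\}$ that intersects every set $B_j$, $j\in[m]$; or (2) there is a real number $y_0$ and a line $l_y$ contained in the plane $\{(s,y_0,t): s,t\in\mathbb{R}\}$ that intersects every set $A_i$, $i\in[n]$.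
   Context: $[n]=\{1,\dots,n\}$. Each $A_i$ lies in the plane $\{x=x_i\}$, each $B_j$ lies in the plane $\{y=y_j\}$, and $P_{ij}\in A_i\cap B_j$. *)

theory Defs
  imports "HOL-Analysis.Analysis"
begin

definition line3 :: "(real \<times> real \<times> real) \<Rightarrow> (real \<times> real \<times> real) \<Rightarrow> (real \<times> real \<times> real) set" where
  "line3 p d = {p + t *\<^sub>R d | t. True}"

definition is_line3 :: "(real \<times> real \<times> real) set \<Rightarrow> bool" where
  "is_line3 L \<longleftrightarrow> (\<exists>p d. d \<noteq> 0 \<and> L = line3 p d)"

definition Pt :: "(nat \<Rightarrow> real) \<Rightarrow> (nat \<Rightarrow> real) \<Rightarrow> (nat \<Rightarrow> nat \<Rightarrow> real) \<Rightarrow> nat \<Rightarrow> nat \<Rightarrow> real \<times> real \<times> real" where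
  "Pt x y z i j = (x i, y j, z i j)"

end

theory Submission
  imports Defs
begin

(* If no line in a plane x = x0 meets every B_j, then the compact convex set of profiles
   v in R^m for which some x0 has (x0, v_j) in conv {(x_i, z_ij)}_i for all j misses the
   plane of profiles a + c y_j. A separating functional g is orthogonal to 1 and y, and
   splitting it into positive and negative parts gives two column weightings g+, g- of equal
   mass and equal y-moment such that sum_ij (g+_j q_i - g-_j p_i) z_ij > 0 for every pair of
   row weightings p, q of equal mass and x-moment. If (2) fails as well, the same argument
   produces such row weightings h+, h-, with the roles of rows and columns exchanged.
   Feeding each pair into the inequality of the other yields two positive sums that are
   negatives of each other. The separation is carried out in real^'j for finite index types,
   so Helly's theorem in the parameter space (x0, a, c) of the lines first reduces the problem
   to at most four rows and four columns. *)

lemma inner_eq_0_if_bounded_below_on_subspace: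
  assumes "subspace W" "\<forall>w\<in>W. b < inner a w" "w \<in> W"
  shows "inner a w = 0"
proof (rule ccontr)
  assume "inner a w \<noteq> 0"
  then have "inner a (((b - 1) / inner a w) *\<^sub>R w) = b - 1" by simp
  moreover have "((b - 1) / inner a w) *\<^sub>R w \<in> W"
    using assms by (simp add: subspace_scale)
  ultimately show False using assms(2) by fastforce
qed

lemma compact_common_first_coordinate:
  fixes H :: "'j::finite \<Rightarrow> (real \<times> real) set"
  assumes "\<And>j. compact (H j)"
  shows "compact {v :: real^'j. \<exists>x0. \<forall>j. (x0, v $ j) \<in> H j}"
proof -
  define Q :: "(real \<times> (real^'j)) set" where "Q = (\<Inter>j. (\<lambda>p. (fst p, snd p $ j)) -` H j)"
  have "closed Q"
    unfolding Q_def by (auto intro!: closed_vimage[OF compact_imp_closed[OF assms]] continuous_intros)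
  moreover have "bounded Q"
  proof -
    have "bounded (\<Union>j. H j)"
      by (simp add: bounded_UN assms compact_imp_bounded)
    then obtain B where B: "\<And>q. q \<in> (\<Union>j. H j) \<Longrightarrow> norm q \<le> B"
      unfolding bounded_iff by blast
    have "Q \<subseteq> cbox (- B, \<chi> j. - B) (B, \<chi> j. B)"
    proof
      fix p assume "p \<in> Q"
      then have "norm (fst p, snd p $ j) \<le> B" for j
        using B unfolding Q_def by blast
      then have "\<bar>fst p\<bar> \<le> B" "\<bar>snd p $ j\<bar> \<le> B" for j
        by (metis norm_fst_le norm_snd_le real_norm_def order_trans)+
      then have "fst p \<in> cbox (- B) B" "snd p \<in> cbox (\<chi> j. - B) (\<chi> j. B)"
        by (simp_all add: mem_box_cart abs_le_iff minus_le_iff)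
      then show "p \<in> cbox (- B, \<chi> j. - B) (B, \<chi> j. B)"
        by (cases p) simp
    qed
    then show ?thesis
      using bounded_cbox bounded_subset by blast
  qed
  ultimately have "compact (snd ` Q)"
    by (intro compact_continuous_image continuous_on_snd) (auto simp: compact_eq_bounded_closed)
  moreover have "snd ` Q = {v. \<exists>x0. \<forall>j. (x0, v $ j) \<in> H j}"
  proof (intro equalityI subsetI)
    show "v \<in> {v. \<exists>x0. \<forall>j. (x0, v $ j) \<in> H j}" if "v \<in> snd ` Q" for v
      using that by (auto simp: Q_def)
  next
    fix v
    assume "v \<in> {v. \<exists>x0. \<forall>j. (x0, v $ j) \<in> H j}"
    then obtain x0 where "(x0, v) \<in> Q"
      by (auto simp: Q_def)
    then show "v \<in> snd ` Q"
      by (rule image_eqI[rotated]) simp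
  qed
  ultimately show ?thesis
    by simp
qed

lemma convex_common_first_coordinate:
  fixes H :: "'j::finite \<Rightarrow> (real \<times> real) set"
  assumes "\<And>j. convex (H j)"
  shows "convex {v :: real^'j. \<exists>x0. \<forall>j. (x0, v $ j) \<in> H j}"
proof (rule convexI)
  fix v w :: "real^'j" and u t :: real
  assume "v \<in> {v. \<exists>x0. \<forall>j. (x0, v $ j) \<in> H j}" "w \<in> {v. \<exists>x0. \<forall>j. (x0, v $ j) \<in> H j}"
    and "0 \<le> u" "0 \<le> t" "u + t = 1"
  then obtain x0 x1 where "(x0, v $ j) \<in> H j" "(x1, w $ j) \<in> H j" for j
    by blast
  then have "(u * x0 + t * x1, (u *\<^sub>R v + t *\<^sub>R w) $ j) \<in> H j" for j
    using convexD[OF assms, of "(x0, v $ j)" j "(x1, w $ j)" u t] \<open>0 \<le> u\<close> \<open>0 \<le> t\<close> \<open>u + t = 1\<close>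
    by simp
  then show "u *\<^sub>R v + t *\<^sub>R w \<in> {v. \<exists>x0. \<forall>j. (x0, v $ j) \<in> H j}"
    by blast
qed

lemma weighted_mean_in_convex_hull:
  fixes f :: "'i \<Rightarrow> 'a::real_vector"
  assumes "finite I" "\<forall>i\<in>I. 0 \<le> w i" "0 < sum w I"
  shows "(\<Sum>i\<in>I. (w i / sum w I) *\<^sub>R f i) \<in> convex hull (f ` I)"
proof (rule convex_sum)
  show "(\<Sum>i\<in>I. w i / sum w I) = 1"
    using assms(3) by (simp flip: sum_divide_distrib)
qed (use assms in \<open>auto intro: hull_inc\<close>)

lemma mem_convex_hull_affine_image:
  assumes "linear f" "p \<in> convex hull S"
  shows "f p + c \<in> convex hull ((\<lambda>q. f q + c) ` S)"
proof -
  have "(\<lambda>q. f q + c) ` S = (\<lambda>q. c + q) ` f ` S"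
    by (auto simp: image_image add.commute)
  then have "convex hull ((\<lambda>q. f q + c) ` S) = (\<lambda>q. c + q) ` f ` (convex hull S)"
    by (simp only: convex_hull_translation convex_hull_linear_image[OF assms(1)])
  then show ?thesis
    using assms(2) by (auto simp: add.commute)
qed

lemma ex_range_eq_if_card_le:
  fixes A :: "'b set"
  assumes "finite A" "A \<noteq> {}" "card A \<le> CARD('a::finite)"
  shows "\<exists>e :: 'a \<Rightarrow> 'b. range e = A"
proof -
  have "A \<lesssim> (UNIV :: 'a set)"
    using assms by (simp add: lepoll_iff_card_le)
  then obtain f :: "'a \<Rightarrow> 'b" where "A \<subseteq> range f"
    by (auto simp: lepoll_iff)
  moreover obtain a where "a \<in> A"
    using assms(2) by blast
  ultimately have "range (\<lambda>k. if f k \<in> A then f k else a) = A"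
    by auto
  then show ?thesis
    by blast
qed

(* (x0, a + c y_j) lies in the hull of the points (x_i, z_ij) exactly when the line
   {(x0, s, a + c s)} meets B_j, which lies in the plane y = y_j. *)
definition x_plane_transversal ::
    "('i \<Rightarrow> real) \<Rightarrow> ('j \<Rightarrow> real) \<Rightarrow> ('i \<Rightarrow> 'j \<Rightarrow> real) \<Rightarrow> 'i set \<Rightarrow> 'j set \<Rightarrow> bool" where
  "x_plane_transversal x y z I J \<longleftrightarrow>
     (\<exists>x0 a c. \<forall>j\<in>J. (x0, a + c * y j) \<in> convex hull ((\<lambda>i. (x i, z i j)) ` I))"

lemma x_plane_transversal_empty [simp]: "x_plane_transversal x y z I {}"
  by (simp add: x_plane_transversal_def)

lemma x_plane_transversal_mono:
  assumes "x_plane_transversal x y z I J" "I \<subseteq> I'" "J' \<subseteq> J"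
  shows "x_plane_transversal x y z I' J'"
  using assms unfolding x_plane_transversal_def by (meson hull_mono image_mono subsetD)

lemma x_plane_transversal_reindex:
  "x_plane_transversal (x \<circ> e) (y \<circ> f) (\<lambda>a b. z (e a) (f b)) A B \<longleftrightarrow>
   x_plane_transversal x y z (e ` A) (f ` B)"
  by (simp add: x_plane_transversal_def image_image)

lemma x_plane_transversal_Helly:
  fixes J :: "'j set"
  assumes small: "\<And>J'. J' \<subseteq> J \<Longrightarrow> card J' \<le> 4 \<Longrightarrow> x_plane_transversal x y z I J'"
  shows "x_plane_transversal x y z I J"
proof -
  define C :: "'j \<Rightarrow> (real \<times> real \<times> real) set" where
    "C j = (\<lambda>(x0, a, c). (x0, a + c * y j)) -` (convex hull ((\<lambda>i. (x i, z i j)) ` I))" for j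
  have transversal_iff: "x_plane_transversal x y z I J' \<longleftrightarrow> \<Inter>(C ` J') \<noteq> {}" for J'
    unfolding x_plane_transversal_def C_def
    by (simp only: ex_in_conv[symmetric] INT_iff vimage_eq split_paired_Ex prod.case)
  have "convex (C j)" for j
  proof -
    have "linear (\<lambda>(x0, a, c). (x0, a + c * y j))"
      by (rule linearI) (auto simp: algebra_simps)
    then show ?thesis
      unfolding C_def by (intro convex_linear_vimage convex_convex_hull)
  qed
  have small_subfamilies: "\<Inter>t \<noteq> {}" if "t \<subseteq> C ` J" "card t \<le> 4" for t
  proof -
    obtain J' where "J' \<subseteq> J" "inj_on C J'" "t = C ` J'"
      using \<open>t \<subseteq> C ` J\<close> by (auto simp: subset_image_inj)
    then show ?thesis
      using small[of J'] \<open>card t \<le> 4\<close> by (simp add: card_image transversal_iff)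
  qed
  have "\<Inter>(C ` J) \<noteq> {}"
  proof (cases "card (C ` J) \<ge> 4")
    case True
    show ?thesis
    proof (rule Helly)
      show "DIM(real \<times> real \<times> real) + 1 \<le> card (C ` J)" using True by simp
      show "\<forall>s\<in>C ` J. convex s" using \<open>\<And>j. convex (C j)\<close> by blast
      show "\<Inter>t \<noteq> {}" if "t \<subseteq> C ` J" "card t = DIM(real \<times> real \<times> real) + 1" for t
        using small_subfamilies that by simp
    qed
  next
    case False
    then show ?thesis using small_subfamilies by simp
  qed
  then show ?thesis by (simp add: transversal_iff)
qed

lemma not_x_plane_transversal_imp_separating_weights:
  fixes x :: "'i::finite \<Rightarrow> real" and y :: "'j::finite \<Rightarrow> real"
  assumes "\<not> x_plane_transversal x y z UNIV UNIV"
  obtains g :: "'j \<Rightarrow> real"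
  where "sum g UNIV = 0" "(\<Sum>j\<in>UNIV. g j * y j) = 0"
    and "\<And>x0 v. (\<forall>j. (x0, v j) \<in> convex hull range (\<lambda>i. (x i, z i j))) \<Longrightarrow> 0 < (\<Sum>j\<in>UNIV. g j * v j)"
proof -
  define K :: "(real^'j) set"
    where "K = {v. \<exists>x0. \<forall>j. (x0, v $ j) \<in> convex hull range (\<lambda>i. (x i, z i j))}"
  define W :: "(real^'j) set" where "W = range (\<lambda>(a, c). \<chi> j. a + c * y j)"
  have W_I: "(\<chi> j. a + c * y j) \<in> W" for a c
    unfolding W_def by (rule range_eqI[of _ _ "(a, c)"]) simp
  have "compact K"
    unfolding K_def by (intro compact_common_first_coordinate finite_imp_compact_convex_hull) simp
  moreover have "convex K"
    unfolding K_def by (intro convex_common_first_coordinate convex_convex_hull)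
  moreover have "K \<noteq> {}"
  proof -
    have "(\<chi> j. z i j) \<in> K" for i
      unfolding K_def by (auto intro: hull_inc)
    then show ?thesis
      by blast
  qed
  moreover have "subspace W"
    unfolding W_def
    by (intro linear_subspace_image subspace_UNIV) (rule linearI; auto simp: vec_eq_iff algebra_simps)
  moreover have "K \<inter> W = {}"
  proof -
    have "(\<chi> j. a + c * y j) \<notin> K" for a c
      using assms unfolding x_plane_transversal_def K_def by auto
    then show ?thesis
      unfolding W_def by auto
  qed
  ultimately obtain a b where a_K: "\<forall>v\<in>K. inner a v < b" and a_W: "\<forall>w\<in>W. b < inner a w"
    using separating_hyperplane_compact_closed closed_subspace subspace_imp_convex by metis
  have a_W_0: "inner a w = 0" if "w \<in> W" for w
    using inner_eq_0_if_bounded_below_on_subspace[OF \<open>subspace W\<close> a_W that] .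
  have "b < 0"
    using a_W \<open>subspace W\<close> subspace_0 by fastforce
  show ?thesis
  proof
    show "sum (\<lambda>j. - a $ j) UNIV = 0"
      using a_W_0[OF W_I[of 1 0]] by (simp add: inner_vec_def sum_negf)
    show "(\<Sum>j\<in>UNIV. - a $ j * y j) = 0"
      using a_W_0[OF W_I[of 0 1]] by (simp add: inner_vec_def sum_negf)
  next
    fix x0 v
    assume "\<forall>j. (x0, v j) \<in> convex hull range (\<lambda>i. (x i, z i j))"
    then have "(\<chi> j. v j) \<in> K"
      unfolding K_def by auto
    then show "0 < (\<Sum>j\<in>UNIV. - a $ j * v j)"
      using a_K \<open>b < 0\<close> by (fastforce simp: inner_vec_def sum_negf)
  qed
qed

definition balanced_pair :: "('i::finite \<Rightarrow> real) \<Rightarrow> ('i \<Rightarrow> real) \<Rightarrow> ('i \<Rightarrow> real) \<Rightarrow> bool" where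
  "balanced_pair x p q \<longleftrightarrow> (\<forall>i. 0 \<le> p i \<and> 0 \<le> q i) \<and> 0 < sum p UNIV \<and> sum q UNIV = sum p UNIV \<and>
     (\<Sum>i\<in>UNIV. q i * x i) = (\<Sum>i\<in>UNIV. p i * x i)"

lemma separating_weights_cross_sum_pos:
  fixes x :: "'i::finite \<Rightarrow> real" and g :: "'j::finite \<Rightarrow> real"
  assumes g_pos: "\<And>x0 v. (\<forall>j. (x0, v j) \<in> convex hull range (\<lambda>i. (x i, z i j))) \<Longrightarrow>
      0 < (\<Sum>j\<in>UNIV. g j * v j)"
    and "balanced_pair x p q"
  shows "0 < (\<Sum>i\<in>UNIV. \<Sum>j\<in>UNIV. (max (g j) 0 * q i - max (- g j) 0 * p i) * z i j)"
proof -
  define t where "t = sum p UNIV"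
  have "0 < t" "sum q UNIV = t" and same_mean: "(\<Sum>i\<in>UNIV. q i * x i) = (\<Sum>i\<in>UNIV. p i * x i)"
    using assms(2) by (auto simp: balanced_pair_def t_def)
  define mean where "mean w f = (\<Sum>i\<in>UNIV. w i * f i) / t" for w f :: "'i \<Rightarrow> real"
  have in_hull: "(mean w x, mean w (\<lambda>i. z i j)) \<in> convex hull range (\<lambda>i. (x i, z i j))"
    if "w = p \<or> w = q" for w j
  proof -
    have "(\<Sum>i\<in>UNIV. (w i / sum w UNIV) *\<^sub>R (x i, z i j)) \<in> convex hull range (\<lambda>i. (x i, z i j))"
      using assms(2) that by (intro weighted_mean_in_convex_hull) (auto simp: balanced_pair_def)
    moreover have "sum w UNIV = t"
      using that \<open>sum q UNIV = t\<close> t_def by auto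
    moreover have "(\<Sum>i\<in>UNIV. (w i / t) *\<^sub>R (x i, z i j)) = (mean w x, mean w (\<lambda>i. z i j))"
      by (simp add: mean_def prod_eq_iff fst_sum snd_sum sum_divide_distrib)
    ultimately show ?thesis
      by simp
  qed
  define v where "v j = (if 0 \<le> g j then mean q (\<lambda>i. z i j) else mean p (\<lambda>i. z i j))" for j
  have "mean q x = mean p x"
    by (simp add: mean_def same_mean)
  then have "(mean p x, v j) \<in> convex hull range (\<lambda>i. (x i, z i j))" for j
    using in_hull[of p j] in_hull[of q j] by (simp add: v_def)
  then have "0 < (\<Sum>j\<in>UNIV. g j * v j)"
    using g_pos by blast
  moreover have "t * (\<Sum>j\<in>UNIV. g j * v j) =
      (\<Sum>i\<in>UNIV. \<Sum>j\<in>UNIV. (max (g j) 0 * q i - max (- g j) 0 * p i) * z i j)"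
  proof -
    have "t * (g j * v j) =
        max (g j) 0 * (\<Sum>i\<in>UNIV. q i * z i j) - max (- g j) 0 * (\<Sum>i\<in>UNIV. p i * z i j)" for j
      using \<open>0 < t\<close> by (simp add: v_def mean_def)
    then have "t * (\<Sum>j\<in>UNIV. g j * v j) =
        (\<Sum>j\<in>UNIV. \<Sum>i\<in>UNIV. (max (g j) 0 * q i - max (- g j) 0 * p i) * z i j)"
      by (simp add: sum_distrib_left sum_subtractf left_diff_distrib mult.assoc)
    also have "\<dots> = (\<Sum>i\<in>UNIV. \<Sum>j\<in>UNIV. (max (g j) 0 * q i - max (- g j) 0 * p i) * z i j)"
      by (rule sum.swap)
    finally show ?thesis .
  qed
  ultimately show ?thesis
    using \<open>0 < t\<close> by (metis mult_pos_pos)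
qed

lemma not_x_plane_transversal_imp_separating_pair:
  fixes x :: "'i::finite \<Rightarrow> real" and y :: "'j::finite \<Rightarrow> real"
  assumes "\<not> x_plane_transversal x y z UNIV UNIV"
  obtains gp gm :: "'j \<Rightarrow> real" where "balanced_pair y gp gm"
    and "\<And>p q. balanced_pair x p q \<Longrightarrow> 0 < (\<Sum>i\<in>UNIV. \<Sum>j\<in>UNIV. (gp j * q i - gm j * p i) * z i j)"
proof -
  obtain g where g_sum: "sum g UNIV = 0" and g_y: "(\<Sum>j\<in>UNIV. g j * y j) = 0"
    and g_pos: "\<And>x0 v. (\<forall>j. (x0, v j) \<in> convex hull range (\<lambda>i. (x i, z i j))) \<Longrightarrow>
      0 < (\<Sum>j\<in>UNIV. g j * v j)"
    using not_x_plane_transversal_imp_separating_weights[OF assms] by blast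
  define gp where "gp j = max (g j) 0" for j
  define gm where "gm j = max (- g j) 0" for j
  have cross_pos: "0 < (\<Sum>i\<in>UNIV. \<Sum>j\<in>UNIV. (gp j * q i - gm j * p i) * z i j)"
    if "balanced_pair x p q" for p q
    unfolding gp_def gm_def using g_pos that by (rule separating_weights_cross_sum_pos)
  have g_split: "g j = gp j - gm j" for j
    by (simp add: gp_def gm_def)
  have nonneg: "0 \<le> gp j" "0 \<le> gm j" for j
    by (simp_all add: gp_def gm_def)
  have same_mass: "sum gm UNIV = sum gp UNIV"
    using g_sum by (simp add: g_split sum_subtractf)
  have "0 < sum gp UNIV"
  proof (rule ccontr)
    assume "\<not> 0 < sum gp UNIV"
    then have "sum gp UNIV = 0" "sum gm UNIV = 0"
      using same_mass sum_nonneg[of UNIV gp] nonneg by force+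
    then have "gp j = 0" "gm j = 0" for j
      by (simp_all add: sum_nonneg_eq_0_iff nonneg)
    moreover have "balanced_pair x (\<lambda>_. 1) (\<lambda>_. 1)"
      by (simp add: balanced_pair_def)
    ultimately show False
      using cross_pos by fastforce
  qed
  moreover have "(\<Sum>j\<in>UNIV. gm j * y j) = (\<Sum>j\<in>UNIV. gp j * y j)"
    using g_y by (simp add: g_split sum_subtractf left_diff_distrib)
  ultimately have "balanced_pair y gp gm"
    using nonneg same_mass by (simp add: balanced_pair_def)
  then show ?thesis
    using that cross_pos by blast
qed

lemma x_or_y_plane_transversal_UNIV:
  fixes x :: "'i::finite \<Rightarrow> real" and y :: "'j::finite \<Rightarrow> real"
  shows "x_plane_transversal x y z UNIV UNIV \<or> x_plane_transversal y x (\<lambda>j i. z i j) UNIV UNIV"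
proof (rule ccontr)
  assume "\<not> ?thesis"
  then have "\<not> x_plane_transversal x y z UNIV UNIV" "\<not> x_plane_transversal y x (\<lambda>j i. z i j) UNIV UNIV"
    by auto
  obtain gp gm where "balanced_pair y gp gm"
    and g: "\<And>p q. balanced_pair x p q \<Longrightarrow> 0 < (\<Sum>i\<in>UNIV. \<Sum>j\<in>UNIV. (gp j * q i - gm j * p i) * z i j)"
    using not_x_plane_transversal_imp_separating_pair[OF \<open>\<not> x_plane_transversal x y z UNIV UNIV\<close>] by blast
  obtain hp hm where "balanced_pair x hp hm"
    and h: "\<And>p q. balanced_pair y p q \<Longrightarrow> 0 < (\<Sum>j\<in>UNIV. \<Sum>i\<in>UNIV. (hp i * q j - hm i * p j) * z i j)"
    using not_x_plane_transversal_imp_separating_pair[OF \<open>\<not> x_plane_transversal y x _ UNIV UNIV\<close>] by blast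
  have "0 < (\<Sum>i\<in>UNIV. \<Sum>j\<in>UNIV. (gp j * hm i - gm j * hp i) * z i j)"
    using g[OF \<open>balanced_pair x hp hm\<close>] .
  moreover have "0 < (\<Sum>j\<in>UNIV. \<Sum>i\<in>UNIV. (hp i * gm j - hm i * gp j) * z i j)"
    using h[OF \<open>balanced_pair y gp gm\<close>] .
  moreover have "(\<Sum>j\<in>UNIV. \<Sum>i\<in>UNIV. (hp i * gm j - hm i * gp j) * z i j) =
      - (\<Sum>i\<in>UNIV. \<Sum>j\<in>UNIV. (gp j * hm i - gm j * hp i) * z i j)"
    by (subst sum.swap) (simp add: sum_negf[symmetric] algebra_simps)
  ultimately show False
    by linarith
qed

lemma x_or_y_plane_transversal:
  fixes I :: "'i set" and J :: "'j set"
  assumes "finite I" "finite J"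
  shows "x_plane_transversal x y z I J \<or> x_plane_transversal y x (\<lambda>j i. z i j) J I"
proof (rule ccontr)
  assume "\<not> ?thesis"
  then have "\<not> x_plane_transversal x y z I J" "\<not> x_plane_transversal y x (\<lambda>j i. z i j) J I"
    by auto
  then obtain J' where J': "J' \<subseteq> J" "card J' \<le> 4" and "\<not> x_plane_transversal x y z I J'"
    using x_plane_transversal_Helly[of J x y z I] by blast
  have "\<not> x_plane_transversal y x (\<lambda>j i. z i j) J' I"
    using \<open>\<not> x_plane_transversal y x _ J I\<close> \<open>J' \<subseteq> J\<close>
      x_plane_transversal_mono[of y x "\<lambda>j i. z i j" J' I J I]
    by blast
  then obtain I' where I': "I' \<subseteq> I" "card I' \<le> 4"
    and not_y: "\<not> x_plane_transversal y x (\<lambda>j i. z i j) J' I'"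
    using x_plane_transversal_Helly[of I y x "\<lambda>j i. z i j" J'] by blast
  have not_x: "\<not> x_plane_transversal x y z I' J'"
    using \<open>\<not> x_plane_transversal x y z I J'\<close> I' x_plane_transversal_mono[of x y z I' J' I J']
    by blast
  have "I' \<noteq> {}" "J' \<noteq> {}"
    using not_x not_y by auto
  have "finite I'" "finite J'"
    using I' J' assms finite_subset by blast+
  then obtain e :: "4 \<Rightarrow> 'i" and f :: "4 \<Rightarrow> 'j" where e: "range e = I'" and f: "range f = J'"
    using ex_range_eq_if_card_le[where 'a = 4, of I'] ex_range_eq_if_card_le[where 'a = 4, of J']
      I' J' \<open>I' \<noteq> {}\<close> \<open>J' \<noteq> {}\<close>
    by auto
  have "x_plane_transversal (x \<circ> e) (y \<circ> f) (\<lambda>a b. z (e a) (f b)) UNIV UNIV \<longleftrightarrow>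
      x_plane_transversal x y z I' J'"
    using x_plane_transversal_reindex[of x e y f z UNIV UNIV] e f by simp
  moreover have "x_plane_transversal (y \<circ> f) (x \<circ> e) (\<lambda>b a. z (e a) (f b)) UNIV UNIV \<longleftrightarrow>
      x_plane_transversal y x (\<lambda>j i. z i j) J' I'"
    using x_plane_transversal_reindex[of y f x e "\<lambda>j i. z i j" UNIV UNIV] e f by simp
  ultimately show False
    using x_or_y_plane_transversal_UNIV[of "x \<circ> e" "y \<circ> f" "\<lambda>a b. z (e a) (f b)"] not_x not_y
    by blast
qed

lemma x_plane_transversal_imp_line:
  assumes "x_plane_transversal x y z I J"
  shows "\<exists>x0 lx. is_line3 lx \<and> lx \<subseteq> {(x0, s, t) | s t. True} \<and>
           (\<forall>j\<in>J. lx \<inter> convex hull {Pt x y z i j | i. i \<in> I} \<noteq> {})"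
proof -
  obtain x0 a c where hull: "\<And>j. j \<in> J \<Longrightarrow> (x0, a + c * y j) \<in> convex hull ((\<lambda>i. (x i, z i j)) ` I)"
    using assms unfolding x_plane_transversal_def by blast
  define lx where "lx = line3 (x0, 0, a) (0, 1, c)"
  have "is_line3 lx"
    unfolding is_line3_def lx_def
    by (rule exI[of _ "(x0, 0, a)"], rule exI[of _ "(0, 1, c)"]) (simp add: zero_prod_def)
  moreover have "lx \<subseteq> {(x0, s, t) | s t. True}"
    by (auto simp: lx_def line3_def)
  moreover have "(x0, y j, a + c * y j) \<in> lx \<inter> convex hull {Pt x y z i j | i. i \<in> I}" if "j \<in> J" for j
  proof
    show "(x0, y j, a + c * y j) \<in> lx"
      unfolding lx_def line3_def by (auto intro!: exI[of _ "y j"] simp: algebra_simps)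
    have "linear (\<lambda>(u, w). (u, 0::real, w))"
      by (rule linearI) auto
    from mem_convex_hull_affine_image[OF this hull[OF that], of "(0, y j, 0)"]
    show "(x0, y j, a + c * y j) \<in> convex hull {Pt x y z i j | i. i \<in> I}"
      by (simp add: Pt_def image_image Setcompr_eq_image)
  qed
  ultimately show ?thesis
    by blast
qed

lemma transposed_x_plane_transversal_imp_line:
  assumes "x_plane_transversal y x (\<lambda>j i. z i j) J I"
  shows "\<exists>y0 ly. is_line3 ly \<and> ly \<subseteq> {(s, y0, t) | s t. True} \<and>
           (\<forall>i\<in>I. ly \<inter> convex hull {Pt x y z i j | j. j \<in> J} \<noteq> {})"
proof -
  obtain y0 b d where hull: "\<And>i. i \<in> I \<Longrightarrow> (y0, b + d * x i) \<in> convex hull ((\<lambda>j. (y j, z i j)) ` J)"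
    using assms unfolding x_plane_transversal_def by blast
  define ly where "ly = line3 (0, y0, b) (1, 0, d)"
  have "is_line3 ly"
    unfolding is_line3_def ly_def
    by (rule exI[of _ "(0, y0, b)"], rule exI[of _ "(1, 0, d)"]) (simp add: zero_prod_def)
  moreover have "ly \<subseteq> {(s, y0, t) | s t. True}"
    by (auto simp: ly_def line3_def)
  moreover have "(x i, y0, b + d * x i) \<in> ly \<inter> convex hull {Pt x y z i j | j. j \<in> J}" if "i \<in> I" for i
  proof
    show "(x i, y0, b + d * x i) \<in> ly"
      unfolding ly_def line3_def by (auto intro!: exI[of _ "x i"] simp: algebra_simps)
    have "linear (\<lambda>(u, w). (0::real, u, w))"
      by (rule linearI) auto
    from mem_convex_hull_affine_image[OF this hull[OF that], of "(x i, 0, 0)"]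
    show "(x i, y0, b + d * x i) \<in> convex hull {Pt x y z i j | j. j \<in> J}"
      by (simp add: Pt_def image_image Setcompr_eq_image)
  qed
  ultimately show ?thesis
    by blast
qed

theorem theorem1:
  fixes n m :: nat and x y :: "nat \<Rightarrow> real" and z :: "nat \<Rightarrow> nat \<Rightarrow> real"
  assumes "n \<ge> 1" and "m \<ge> 1"
  shows "(\<exists>x0 lx. is_line3 lx \<and> lx \<subseteq> {(x0, s, t) | s t. True} \<and>
            (\<forall>j\<in>{1..m}. lx \<inter> convex hull {Pt x y z i j | i. i \<in> {1..n}} \<noteq> {}))
       \<or> (\<exists>y0 ly. is_line3 ly \<and> ly \<subseteq> {(s, y0, t) | s t. True} \<and>
            (\<forall>i\<in>{1..n}. ly \<inter> convex hull {Pt x y z i j | j. j \<in> {1..m}} \<noteq> {}))"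
  using x_or_y_plane_transversal[of "{1..n}" "{1..m}" x y z]
    x_plane_transversal_imp_line[of x y z "{1..n}" "{1..m}"]
    transposed_x_plane_transversal_imp_line[of y x z "{1..m}" "{1..n}"]
  by (meson finite_atLeastAtMost)

end
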